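(* Let $\Delta=(\Gamma,\mathbf{R})$ be a theory such that $\bigcirc(B/A)\in\mathbf{R}^{\mathrm{o}}$, there is no $r\in\mathbf{R}^{\mathrm{o}}$ with $r\triangleright\bigcirc(B/A)$, and $\Diamond(A\wedge B\wedge C)\in\Gamma$, where $A,B,C$ are Boolean formulas. Then $\Delta\mid\sim\bigcirc(B/A\wedge C)$.
   Context: Boolean formulas over propositional letters; $\models_{\mathrm{PL}}$ classical entailment, $\models_{\mathrm{S5}}$ S5 entailment; $\Diamond A=\neg\Box\neg A$ and $w\models\Box A$ iff $A$ holds at all worlds. A theory is $\Delta=(\Gamma,\mathbf{R})$, $\Gamma$ a finite set of Boolean or alethic formulas, $\mathbf{R}=(\mathbf{R}^{\Rightarrow},\mathbf{R}^{\mathrm{o}})$, $\mathbf{R}^{\Rightarrow}$ a finite (coherent) set of normality conditionals and $\mathbf{R}^{\mathrm{o}}$ a finite set of obligations $\bigcirc(B/A)$ (body $b=A$, head $h=B$). Overriding (relative to $\Gamma$): $r_j\triangleright r_i$ iff (i) $\{h(r_i),h(r_j)\}\cup\Gamma\models_{\mathrm{S5}}\bot$; (ii) $b(r_j)\models_{\mathrm{PL}}b(r_i)$ and $b(r_i)\not\models_{\mathrm{PL}}b(r_j)$; (iii) $\{h(r_i),b(r_j)\}\not\models_{\mathrm{PL}}\bot$. An $\mathbf{R}$-ordered model is $(W,\succeq_N,\succeq_I,v)$ with $W\neq\emptyset$, valuation $v$, $\succeq_N$ the normality total preorder determined by $\mathbf{R}^{\Rightarrow}$ via the lexicographic ranking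 on falsified conditionals (coherence: no nonempty $X\subseteq\mathbf{R}^{\Rightarrow}$ has $\{A\rightarrow B:A\Rightarrow B\in X\}\models_{\mathrm{PL}}\bigwedge_{r\in X}\neg b(r)$; $\mathcal{E}_0=\mathbf{R}^{\Rightarrow}$, $\mathcal{E}_{i+1}=\{A\Rightarrow B\in\mathbf{R}^{\Rightarrow}:\mathrm{m}(\mathcal{E}_i)\models_{\mathrm{PL}}\neg A\}$ with $\mathrm{m}(X)=\{A\rightarrow B:A\Rightarrow B\in X\}$, $m$ the stabilization index, $\Delta_i=\mathcal{E}_i\setminus\mathcal{E}_{i+1}$, $\Delta_m=\mathcal{E}_m$; $w_1\succeq_N w_2$ iff $\langle|\Delta_{m-1}\cap F(w_1)|,\dots,|\Delta_0\cap F(w_1)|\rangle$ is lexicographically $\le$ the corresponding tuple for $w_2$, where $F(w)$ is the set of conditionals in $\mathbf{R}^{\Rightarrow}$ whose body holds and head fails at $w$), and $w_1\succeq_I w_2$ iff $V(w_1)\subseteq V(w_2)$ where $V(w)=\{r_i\in\mathbf{R}^{\mathrm{o}}:w\models b(r_i)\wedge\neg h(r_i)$ and $w\not\models b(r_j)$ for all $r_j\in\mathbf{R}^{\mathrm{o}}$ with $r_j\triangleright r_i\}$. $\max_{\succeq}(X)=\{w\in X:\forall u\in X(u\succeq w\Rightarrow w\succeq u)\}$. Lifting: $U\succeq_I^{s}U'$ iff for every $u'\in U'$ there is $u\in U$ with $u\succeq_I u'$. Truth: $w\models\bigcirc(B/A)$ iff $\max_{\succeq_N}(\Vert A\wedge\neg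 B\Vert)\not\succeq_I^{s}\max_{\succeq_N}(\Vert A\wedge B\Vert)$. $\Delta\mid\sim\varphi$ iff in every $\mathbf{R}$-ordered model every world satisfying all of $\Gamma$ satisfies $\varphi$. *)

theory Defs
  imports Main
begin

datatype 'a bform = BVar 'a | BTop | BBot | BNot "'a bform" | BAnd "'a bform" "'a bform"
  | BOr "'a bform" "'a bform" | BImp "'a bform" "'a bform"

primrec beval :: "('a \<Rightarrow> bool) \<Rightarrow> 'a bform \<Rightarrow> bool" where
  "beval v (BVar p) = v p"
| "beval v BTop = True"
| "beval v BBot = False"
| "beval v (BNot a) = (\<not> beval v a)"
| "beval v (BAnd a b) = (beval v a \<and> beval v b)"
| "beval v (BOr a b) = (beval v a \<or> beval v b)"
| "beval v (BImp a b) = (beval v a \<longrightarrow> beval v b)"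

definition pl_entails :: "'a bform \<Rightarrow> 'a bform \<Rightarrow> bool" where
  "pl_entails a b \<longleftrightarrow> (\<forall>v. beval v a \<longrightarrow> beval v b)"

datatype 'a mform = MB "'a bform" | MNot "'a mform" | MAnd "'a mform" "'a mform"
  | MOr "'a mform" "'a mform" | MImp "'a mform" "'a mform" | MBox "'a mform"

definition MDia :: "'a mform \<Rightarrow> 'a mform" where
  "MDia f = MNot (MBox (MNot f))"

text \<open>Truth at a world w of a model with world set W and valuation v; Box quantifies
  over all worlds (universal accessibility, S5).\<close>
primrec msat :: "'w set \<Rightarrow> ('w \<Rightarrow> 'a \<Rightarrow> bool) \<Rightarrow> 'w \<Rightarrow> 'a mform \<Rightarrow> bool" where
  "msat W v w (MB a) = beval (v w) a"
| "msat W v w (MNot f) = (\<not> msat W v w f)"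
| "msat W v w (MAnd f g) = (msat W v w f \<and> msat W v w g)"
| "msat W v w (MOr f g) = (msat W v w f \<or> msat W v w g)"
| "msat W v w (MImp f g) = (msat W v w f \<longrightarrow> msat W v w g)"
| "msat W v w (MBox f) = (\<forall>u\<in>W. msat W v u f)"

text \<open>S5-unsatisfiability of a set of formulas (i.e. S \<Turnstile>_S5 \<bottom>).  Worlds are taken to be
  valuations themselves; this loses no generality for S5 (universal models).\<close>
definition s5_unsat :: "'a mform set \<Rightarrow> bool" where
  "s5_unsat S \<longleftrightarrow> \<not> (\<exists>(W :: ('a \<Rightarrow> bool) set) u. u \<in> W \<and> (\<forall>f\<in>S. msat W (\<lambda>x. x) u f))"

text \<open>A normality conditional A \<Rightarrow> B and an obligation O(B/A) are both represented as a
  pair (body, head) = (A, B).\<close>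
type_synonym 'a rule = "'a bform \<times> 'a bform"

definition body :: "'a rule \<Rightarrow> 'a bform" where "body r = fst r"
definition head :: "'a rule \<Rightarrow> 'a bform" where "head r = snd r"

definition overrides :: "'a mform set \<Rightarrow> 'a rule \<Rightarrow> 'a rule \<Rightarrow> bool" where
  "overrides \<Gamma> rj ri \<longleftrightarrow>
     s5_unsat ({MB (head ri), MB (head rj)} \<union> \<Gamma>)
   \<and> pl_entails (body rj) (body ri) \<and> \<not> pl_entails (body ri) (body rj)
   \<and> (\<exists>v. beval v (head ri) \<and> beval v (body rj))"

definition mat_sat :: "('a \<Rightarrow> bool) \<Rightarrow> 'a rule set \<Rightarrow> bool" where
  "mat_sat v X \<longleftrightarrow> (\<forall>r\<in>X. beval v (body r) \<longrightarrow> beval v (head r))"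

definition coherent :: "'a rule set \<Rightarrow> bool" where
  "coherent Rn \<longleftrightarrow> (\<forall>X. X \<subseteq> Rn \<longrightarrow> X \<noteq> {} \<longrightarrow>
      \<not> (\<forall>v. mat_sat v X \<longrightarrow> (\<forall>r\<in>X. \<not> beval v (body r))))"

fun Eseq :: "'a rule set \<Rightarrow> nat \<Rightarrow> 'a rule set" where
  "Eseq Rn 0 = Rn"
| "Eseq Rn (Suc i) = {r \<in> Rn. \<forall>v. mat_sat v (Eseq Rn i) \<longrightarrow> \<not> beval v (body r)}"

definition stab_index :: "'a rule set \<Rightarrow> nat" where
  "stab_index Rn = (LEAST i. Eseq Rn (Suc i) = Eseq Rn i)"

definition Delta_part :: "'a rule set \<Rightarrow> nat \<Rightarrow> 'a rule set" where
  "Delta_part Rn i = (if i = stab_index Rn then Eseq Rn i else Eseq Rn i - Eseq Rn (Suc i))"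

definition falsified :: "'a rule set \<Rightarrow> ('w \<Rightarrow> 'a \<Rightarrow> bool) \<Rightarrow> 'w \<Rightarrow> 'a rule set" where
  "falsified Rn v w = {r \<in> Rn. beval (v w) (body r) \<and> \<not> beval (v w) (head r)}"

definition rank_tuple :: "'a rule set \<Rightarrow> ('w \<Rightarrow> 'a \<Rightarrow> bool) \<Rightarrow> 'w \<Rightarrow> nat list" where
  "rank_tuple Rn v w = map (\<lambda>i. card (Delta_part Rn i \<inter> falsified Rn v w)) (rev [0..<stab_index Rn])"

definition lex_le :: "nat list \<Rightarrow> nat list \<Rightarrow> bool" where
  "lex_le xs ys \<longleftrightarrow> xs = ys \<or> (xs, ys) \<in> lexord {(x, y). x < y}"

definition geN :: "'a rule set \<Rightarrow> ('w \<Rightarrow> 'a \<Rightarrow> bool) \<Rightarrow> 'w \<Rightarrow> 'w \<Rightarrow> bool" where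
  "geN Rn v w1 w2 \<longleftrightarrow> lex_le (rank_tuple Rn v w1) (rank_tuple Rn v w2)"

definition viol :: "'a mform set \<Rightarrow> 'a rule set \<Rightarrow> ('w \<Rightarrow> 'a \<Rightarrow> bool) \<Rightarrow> 'w \<Rightarrow> 'a rule set" where
  "viol \<Gamma> Ro v w = {ri \<in> Ro. beval (v w) (body ri) \<and> \<not> beval (v w) (head ri)
      \<and> (\<forall>rj\<in>Ro. overrides \<Gamma> rj ri \<longrightarrow> \<not> beval (v w) (body rj))}"

definition geI :: "'a mform set \<Rightarrow> 'a rule set \<Rightarrow> ('w \<Rightarrow> 'a \<Rightarrow> bool) \<Rightarrow> 'w \<Rightarrow> 'w \<Rightarrow> bool" where
  "geI \<Gamma> Ro v w1 w2 \<longleftrightarrow> viol \<Gamma> Ro v w1 \<subseteq> viol \<Gamma> Ro v w2"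

definition maxel :: "('w \<Rightarrow> 'w \<Rightarrow> bool) \<Rightarrow> 'w set \<Rightarrow> 'w set" where
  "maxel ge X = {w \<in> X. \<forall>u\<in>X. ge u w \<longrightarrow> ge w u}"

definition lift_ge :: "('w \<Rightarrow> 'w \<Rightarrow> bool) \<Rightarrow> 'w set \<Rightarrow> 'w set \<Rightarrow> bool" where
  "lift_ge ge U U' \<longleftrightarrow> (\<forall>u'\<in>U'. \<exists>u\<in>U. ge u u')"

definition ext :: "'w set \<Rightarrow> ('w \<Rightarrow> 'a \<Rightarrow> bool) \<Rightarrow> 'a bform \<Rightarrow> 'w set" where
  "ext W v a = {w \<in> W. beval (v w) a}"

datatype 'a dform = DAl "'a mform" | DObl "'a bform" "'a bform"
  \<comment> \<open>DObl A B stands for O(B/A)\<close>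

fun dsat :: "'a mform set \<Rightarrow> 'a rule set \<Rightarrow> 'a rule set \<Rightarrow> 'w set \<Rightarrow> ('w \<Rightarrow> 'a \<Rightarrow> bool) \<Rightarrow> 'w \<Rightarrow> 'a dform \<Rightarrow> bool" where
  "dsat \<Gamma> Rn Ro W v w (DAl f) = msat W v w f"
| "dsat \<Gamma> Rn Ro W v w (DObl A B) =
     (\<not> lift_ge (geI \<Gamma> Ro v)
          (maxel (geN Rn v) (ext W v (BAnd A (BNot B))))
          (maxel (geN Rn v) (ext W v (BAnd A B))))"

text \<open>\<Delta> |~ \<phi>, with models whose worlds range over the type 'w (the theorem is stated for
  an arbitrary type 'w, hence for all models).\<close>
definition dentails :: "'w itself \<Rightarrow> 'a mform set \<Rightarrow> 'a rule set \<Rightarrow> 'a rule set \<Rightarrow> 'a dform \<Rightarrow> bool" where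
  "dentails _ \<Gamma> Rn Ro \<phi> \<longleftrightarrow>
     (\<forall>(W :: 'w set) v. W \<noteq> {} \<longrightarrow>
        (\<forall>w\<in>W. (\<forall>g\<in>\<Gamma>. msat W v w g) \<longrightarrow> dsat \<Gamma> Rn Ro W v w \<phi>))"

end

theory Submission
  imports Defs
begin

text \<open>Since \<open>\<Diamond>(A \<and> B \<and> C)\<close> holds, the \<open>A \<and> C \<and> B\<close>-worlds form a nonempty set, and it has a
  \<open>\<succeq>\<^sub>N\<close>-maximal element \<open>w\<^sub>0\<close> because rank tuples have a fixed length, so the lexicographic
  order on them is well-founded.
  \<open>\<bigcirc>(B/A)\<close> is not violated at \<open>w\<^sub>0\<close>, but it is violated at every \<open>A \<and> C \<and> \<not>B\<close>-world \<open>u\<close>, and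
  since no obligation overrides it, it lies in \<open>V(u) - V(w\<^sub>0)\<close>. Hence no such \<open>u\<close> is
  \<open>\<succeq>\<^sub>I w\<^sub>0\<close>, which is the truth condition of \<open>\<bigcirc>(B/A \<and> C)\<close>.\<close>

lemma maxel_reflcl_nonempty:
  assumes "wf r" and "X \<noteq> {}"
  shows "maxel (\<lambda>u w. (f u, f w) \<in> r\<^sup>=) X \<noteq> {}"
proof -
  obtain z where "z \<in> f ` X" and z_min: "\<And>y. (y, z) \<in> r \<Longrightarrow> y \<notin> f ` X"
    using wfE_min'[OF \<open>wf r\<close>] \<open>X \<noteq> {}\<close> by (metis image_is_empty)
  then obtain w where "w \<in> X" and "z = f w"
    by blast
  have "(f w, f u) \<in> r\<^sup>=" if "u \<in> X" and "(f u, f w) \<in> r\<^sup>=" for u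
    using that z_min \<open>z = f w\<close> by auto
  with \<open>w \<in> X\<close> have "w \<in> maxel (\<lambda>u w. (f u, f w) \<in> r\<^sup>=) X"
    by (simp add: maxel_def)
  then show ?thesis
    by blast
qed

lemma length_rank_tuple: "length (rank_tuple Rn v w) = stab_index Rn"
  by (simp add: rank_tuple_def)

lemma geN_iff_lex:
  "geN Rn v u w \<longleftrightarrow> (rank_tuple Rn v u, rank_tuple Rn v w) \<in> (lex {(x, y). x < y})\<^sup>="
  by (auto simp: geN_def lex_le_def lexord_lex length_rank_tuple)

lemma maxel_geN_nonempty: "X \<noteq> {} \<Longrightarrow> maxel (geN Rn v) X \<noteq> {}"
  using maxel_reflcl_nonempty[OF wf_lex[OF wf_less]]
  by (simp add: geN_iff_lex[abs_def])

lemma in_viol_if_not_overridden: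
  assumes "(A, B) \<in> Ro" and "\<not> (\<exists>r\<in>Ro. overrides \<Gamma> r (A, B))"
    and "beval (v u) A" and "\<not> beval (v u) B"
  shows "(A, B) \<in> viol \<Gamma> Ro v u"
  using assms by (auto simp: viol_def body_def head_def)

lemma not_in_viol_if_head: "beval (v w) B \<Longrightarrow> (A, B) \<notin> viol \<Gamma> Ro v w"
  by (simp add: viol_def head_def)

theorem proposition6:
  fixes \<Gamma> :: "'a mform set" and Rn Ro :: "'a rule set" and A B C :: "'a bform"
  assumes "finite \<Gamma>" and "finite Rn" and "finite Ro" and "coherent Rn"
    and "(A, B) \<in> Ro"
    and "\<not> (\<exists>r\<in>Ro. overrides \<Gamma> r (A, B))"
    and "MDia (MB (BAnd (BAnd A B) C)) \<in> \<Gamma>"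
  shows "dentails TYPE('w) \<Gamma> Rn Ro (DObl (BAnd A C) B)"
  unfolding dentails_def
proof (intro allI impI ballI)
  fix W :: "'w set" and v w
  assume "w \<in> W" and "\<forall>g\<in>\<Gamma>. msat W v w g"
  then have "msat W v w (MDia (MB (BAnd (BAnd A B) C)))"
    using assms(7) by blast
  then obtain x where "x \<in> W" and "beval (v x) (BAnd (BAnd A B) C)"
    by (auto simp: MDia_def)
  then have "ext W v (BAnd (BAnd A C) B) \<noteq> {}"
    unfolding ext_def by auto
  then obtain w\<^sub>0 where w\<^sub>0: "w\<^sub>0 \<in> maxel (geN Rn v) (ext W v (BAnd (BAnd A C) B))"
    using maxel_geN_nonempty ex_in_conv by metis
  then have w\<^sub>0_not_viol: "(A, B) \<notin> viol \<Gamma> Ro v w\<^sub>0"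
    by (simp add: maxel_def ext_def not_in_viol_if_head)
  have "\<not> geI \<Gamma> Ro v u w\<^sub>0"
    if "u \<in> maxel (geN Rn v) (ext W v (BAnd (BAnd A C) (BNot B)))" for u
  proof -
    from that have "beval (v u) A" and "\<not> beval (v u) B"
      by (simp_all add: maxel_def ext_def)
    with assms(5,6) have "(A, B) \<in> viol \<Gamma> Ro v u"
      by (rule in_viol_if_not_overridden)
    with w\<^sub>0_not_viol show ?thesis
      unfolding geI_def by blast
  qed
  with w\<^sub>0 show "dsat \<Gamma> Rn Ro W v w (DObl (BAnd A C) B)"
    unfolding dsat.simps lift_ge_def by blast
qed

end
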